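(* Let $X$ be a real Banach space, $Y$ a closed subspace of $X$, $(\Omega,\Sigma,\mu)$ a complete probability space, $1\leq p<\infty$ and $n$ a positive integer. Let $f_1,\ldots,f_n\in L_p(\mu,X)$ and let $g:\Omega\to Y$ be a $\mu$-measurable function such that for almost all $s\in\Omega$, $g(s)$ is a relative $p$-center of $\{f_1(s),\ldots,f_n(s)\}$ in $Y$. Then $g\in L_p(\mu,Y)$ and $g$ is a relative $p$-center of $\{f_1,\ldots,f_n\}\subset L_p(\mu,X)$ in $L_p(\mu,Y)$, i.e. $\sum_{i=1}^n\|f_i-g\|_p^p\leq\sum_{i=1}^n\|f_i-h\|_p^p$ for all $h\in L_p(\mu,Y)$.
   Context: A function $\Omega\to X$ is $\mu$-measurable (strongly measurable) if it is the $\mu$-a.e. limit of a sequence of $\Sigma$-simple functions. $L_p(\mu,X)$ denotes the Banach space of Bochner $p$-integrable functions $\Omega\to X$ with norm $\|f\|_p=(\int_\Omega\|f(s)\|^p\,d\mu(s))^{1/p}$, and $L_p(\mu,Y)$ the subspace of those with values in $Y$. For a subset $Y$ of a normed space $X$, a finite set $\{a_1,\ldots,a_n\}\subset X$ and $m\in[1,\infty)$, a point $y_0\in Y$ is a relative $m$-center of $\{a_1,\ldots,a_n\}$ in $Y$ if $\sum_{i=1}^n\|a_i-y_0\|^m\leq\sum_{i=1}^n\|a_i-y\|^m$ for all $y\in Y$. *)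

theory Defs
  imports "HOL-Probability.Probability"
begin

definition strongly_measurable :: "'a measure \<Rightarrow> ('a \<Rightarrow> 'b::real_normed_vector) \<Rightarrow> bool" where
  "strongly_measurable M f \<longleftrightarrow>
     (\<exists>s. (\<forall>k. simple_function M (s k)) \<and> (AE x in M. (\<lambda>k. s k x) \<longlonglongrightarrow> f x))"

text \<open>Bochner p-integrable functions (as functions, not equivalence classes).\<close>
definition Lp_set :: "'a measure \<Rightarrow> real \<Rightarrow> ('a \<Rightarrow> 'b::real_normed_vector) set" where
  "Lp_set M p = {f. strongly_measurable M f \<and>
                     (\<integral>\<^sup>+ x. ennreal (norm (f x) powr p) \<partial>M) < \<infinity>}"

definition Lp_sub :: "'a measure \<Rightarrow> real \<Rightarrow> 'b::real_normed_vector set \<Rightarrow> ('a \<Rightarrow> 'b) set" where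
  "Lp_sub M p Y = {f \<in> Lp_set M p. AE x in M. f x \<in> Y}"

definition Lp_norm :: "'a measure \<Rightarrow> real \<Rightarrow> ('a \<Rightarrow> 'b::real_normed_vector) \<Rightarrow> real" where
  "Lp_norm M p f = (\<integral>x. norm (f x) powr p \<partial>M) powr (1 / p)"

definition relative_center :: "'b::real_normed_vector set \<Rightarrow> (nat \<Rightarrow> 'b) \<Rightarrow> nat \<Rightarrow> real \<Rightarrow> 'b \<Rightarrow> bool" where
  "relative_center Y a n m y0 \<longleftrightarrow> y0 \<in> Y \<and>
     (\<forall>y\<in>Y. (\<Sum>i=1..n. norm (a i - y0) powr m) \<le> (\<Sum>i=1..n. norm (a i - y) powr m))"

end

theory Submission
  imports Defs
begin

text \<open>Comparing \<open>g(s)\<close> with the competitor \<open>0 \<in> Y\<close> gives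
  \<open>\<parallel>g(s)\<parallel>^p \<le> 2^(p+1) \<Sum>\<^sub>i \<parallel>f\<^sub>i(s)\<parallel>^p\<close> almost everywhere, so \<open>g\<close> is \<open>p\<close>-integrable.
  Since \<open>\<parallel>u\<parallel>\<^sub>p\<^sup>p = \<integral>\<parallel>u\<parallel>\<^sup>p\<close>, the global inequality is the integral of the pointwise
  minimality of \<open>g(s)\<close>, which holds a.e. against every \<open>h(s) \<in> Y\<close>.\<close>

lemma powr_add_le_two_powr:
  fixes a b p :: real
  assumes "a \<ge> 0" "b \<ge> 0" "p \<ge> 0"
  shows "(a + b) powr p \<le> 2 powr p * (a powr p + b powr p)"
proof -
  have "(a + b) powr p \<le> (2 * max a b) powr p"
    by (rule powr_mono2) (use assms in auto)
  also have "\<dots> = 2 powr p * max a b powr p"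
    using assms by (simp add: powr_mult)
  also have "max a b powr p \<le> a powr p + b powr p"
    by (cases "a \<le> b") (auto simp: max_def)
  then have "2 powr p * max a b powr p \<le> 2 powr p * (a powr p + b powr p)"
    by simp
  finally show ?thesis .
qed

lemma norm_diff_powr_le:
  fixes x y :: "'b::real_normed_vector" and p :: real
  assumes "p \<ge> 0"
  shows "norm (x - y) powr p \<le> 2 powr p * (norm x powr p + norm y powr p)"
proof -
  have "norm (x - y) powr p \<le> (norm x + norm y) powr p"
    by (rule powr_mono2) (use assms norm_triangle_ineq4 in auto)
  also have "\<dots> \<le> 2 powr p * (norm x powr p + norm y powr p)"
    by (rule powr_add_le_two_powr) (use assms in auto)
  finally show ?thesis .
qed

lemma relative_center_norm_powr_le:
  fixes a :: "nat \<Rightarrow> 'b::real_normed_vector"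
  assumes "subspace Y" "relative_center Y a n p y0" "n \<ge> 1" "p \<ge> 0"
  shows "norm y0 powr p \<le> 2 powr (p + 1) * (\<Sum>i=1..n. norm (a i) powr p)"
proof -
  let ?S = "\<Sum>i=1..n. norm (a i) powr p"
  have "norm (a 1 - y0) powr p \<le> (\<Sum>i=1..n. norm (a i - y0) powr p)"
    by (rule member_le_sum) (use assms(3) in auto)
  also have "\<dots> \<le> ?S"
    using assms(1,2) subspace_0 unfolding relative_center_def by fastforce
  finally have center_term: "norm (a 1 - y0) powr p \<le> ?S" .
  have first_term: "norm (a 1) powr p \<le> ?S"
    by (rule member_le_sum) (use assms(3) in auto)
  have "norm y0 powr p \<le> 2 powr p * (norm (a 1) powr p + norm (a 1 - y0) powr p)"
    using norm_diff_powr_le[OF assms(4), of "a 1" "a 1 - y0"] by simp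
  also have "\<dots> \<le> 2 powr p * (?S + ?S)"
    using first_term center_term by (intro mult_left_mono add_mono) auto
  finally show ?thesis
    by (simp add: powr_add)
qed

lemma strongly_measurable_diff:
  assumes "strongly_measurable M u" "strongly_measurable M v"
  shows "strongly_measurable M (\<lambda>x. u x - v x)"
proof -
  obtain s where s: "\<And>k. simple_function M (s k)" "AE x in M. (\<lambda>k. s k x) \<longlonglongrightarrow> u x"
    using assms(1) unfolding strongly_measurable_def by blast
  obtain t where t: "\<And>k. simple_function M (t k)" "AE x in M. (\<lambda>k. t k x) \<longlonglongrightarrow> v x"
    using assms(2) unfolding strongly_measurable_def by blast
  show ?thesis
    unfolding strongly_measurable_def
  proof (intro exI conjI allI)
    show "simple_function M (\<lambda>x. s k x - t k x)" for k
      by (rule simple_function_compose2[OF s(1) t(1)])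
    show "AE x in M. (\<lambda>k. s k x - t k x) \<longlonglongrightarrow> u x - v x"
      using s(2) t(2) by eventually_elim (rule tendsto_diff)
  qed
qed

text \<open>Completeness is what allows modifying the limit on the null set where the simple
  approximations fail to converge.\<close>

lemma strongly_measurable_borel_measurable:
  assumes cm: "complete_measure M" and "strongly_measurable M u"
  shows "u \<in> borel_measurable M"
proof -
  obtain s where s: "\<And>k. simple_function M (s k)" "AE x in M. (\<lambda>k. s k x) \<longlonglongrightarrow> u x"
    using assms(2) unfolding strongly_measurable_def by blast
  define N where "N = {x \<in> space M. \<not> (\<lambda>k. s k x) \<longlonglongrightarrow> u x}"
  have N: "N \<in> null_sets M"
    using complete_measure.AE_iff_null_sets[OF cm] s(2) unfolding N_def by simp
  define v where "v x = (if x \<in> N then 0 else u x)" for x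
  have "(\<lambda>x. if x \<in> N then 0 else s k x) \<in> borel_measurable M" for k
    by (rule measurable_If_set) (use N s(1) borel_measurable_simple_function in auto)
  then have v: "v \<in> borel_measurable M"
    by (rule borel_measurable_LIMSEQ_metric) (auto simp: v_def N_def)
  show ?thesis
  proof (rule measurableI)
    fix A :: "'b set" assume "A \<in> sets borel"
    show "u -` A \<inter> space M \<in> sets M"
    proof (rule complete_measure.in_sets_AE[OF cm])
      show "v -` A \<inter> space M \<in> sets M"
        using v \<open>A \<in> sets borel\<close> by (rule measurable_sets)
      show "AE x in M. (x \<in> v -` A \<inter> space M) = (x \<in> u -` A \<inter> space M)"
        using s(2) by eventually_elim (auto simp: v_def N_def)
    qed auto
  qed simp
qed

lemma Lp_set_borel_measurable:
  assumes "complete_measure M" "u \<in> Lp_set M p"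
  shows "u \<in> borel_measurable M"
  using assms strongly_measurable_borel_measurable unfolding Lp_set_def by blast

lemma Lp_set_integrable_norm_powr:
  assumes "complete_measure M" "u \<in> Lp_set M p"
  shows "integrable M (\<lambda>x. norm (u x) powr p)"
proof (rule integrableI_bounded)
  show "(\<lambda>x. norm (u x) powr p) \<in> borel_measurable M"
    using Lp_set_borel_measurable[OF assms] by measurable
qed (use assms(2) in \<open>auto simp: Lp_set_def\<close>)

lemma Lp_setI:
  assumes "strongly_measurable M u" "integrable M (\<lambda>x. norm (u x) powr p)"
  shows "u \<in> Lp_set M p"
  using assms by (simp add: Lp_set_def integrable_iff_bounded)

lemma Lp_set_diff_integrable_norm_powr:
  assumes cm: "complete_measure M" and u: "u \<in> Lp_set M p" and v: "v \<in> Lp_set M p"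
    and "p \<ge> 0"
  shows "integrable M (\<lambda>x. norm (u x - v x) powr p)"
proof (rule Bochner_Integration.integrable_bound)
  show "integrable M (\<lambda>x. 2 powr p * (norm (u x) powr p + norm (v x) powr p))"
    using Lp_set_integrable_norm_powr[OF cm u] Lp_set_integrable_norm_powr[OF cm v] by auto
  have "(\<lambda>x. u x - v x) \<in> borel_measurable M"
    using u v strongly_measurable_diff strongly_measurable_borel_measurable[OF cm]
    unfolding Lp_set_def by blast
  then show "(\<lambda>x. norm (u x - v x) powr p) \<in> borel_measurable M"
    by measurable
  show "AE x in M. norm (norm (u x - v x) powr p)
      \<le> norm (2 powr p * (norm (u x) powr p + norm (v x) powr p))"
    by (intro AE_I2) (simp add: norm_diff_powr_le[OF \<open>p \<ge> 0\<close>])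
qed

lemma Lp_norm_powr:
  assumes "p > 0"
  shows "Lp_norm M p u powr p = (\<integral>x. norm (u x) powr p \<partial>M)"
proof -
  have "0 \<le> (\<integral>x. norm (u x) powr p \<partial>M)"
    by (rule integral_nonneg_AE) auto
  then show ?thesis
    unfolding Lp_norm_def using assms by (simp add: powr_powr)
qed

lemma sum_Lp_norm_diff_powr:
  assumes "complete_measure M" "p > 0" "finite I" "\<And>i. i \<in> I \<Longrightarrow> f i \<in> Lp_set M p"
    and "g \<in> Lp_set M p"
  shows "(\<Sum>i\<in>I. Lp_norm M p (\<lambda>s. f i s - g s) powr p)
       = (\<integral>s. (\<Sum>i\<in>I. norm (f i s - g s) powr p) \<partial>M)"
proof -
  have "integrable M (\<lambda>s. norm (f i s - g s) powr p)" if "i \<in> I" for i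
    using Lp_set_diff_integrable_norm_powr[OF assms(1) assms(4)[OF that] assms(5)] assms(2) by simp
  then show ?thesis
    using assms(2,3) by (simp add: Lp_norm_powr Bochner_Integration.integral_sum)
qed

lemma sum_Lp_norm_diff_powr_mono:
  assumes cm: "complete_measure M" and p: "p > 0" and I: "finite I"
    and f: "\<And>i. i \<in> I \<Longrightarrow> f i \<in> Lp_set M p"
    and g: "g \<in> Lp_set M p" and h: "h \<in> Lp_set M p"
    and AE_le: "AE s in M. (\<Sum>i\<in>I. norm (f i s - g s) powr p) \<le> (\<Sum>i\<in>I. norm (f i s - h s) powr p)"
  shows "(\<Sum>i\<in>I. Lp_norm M p (\<lambda>s. f i s - g s) powr p)
       \<le> (\<Sum>i\<in>I. Lp_norm M p (\<lambda>s. f i s - h s) powr p)"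
proof -
  have "integrable M (\<lambda>s. \<Sum>i\<in>I. norm (f i s - u s) powr p)" if "u \<in> Lp_set M p" for u
    using Lp_set_diff_integrable_norm_powr[OF cm f that] p by auto
  then have "(\<integral>s. (\<Sum>i\<in>I. norm (f i s - g s) powr p) \<partial>M)
      \<le> (\<integral>s. (\<Sum>i\<in>I. norm (f i s - h s) powr p) \<partial>M)"
    using g h AE_le by (intro integral_mono_AE)
  then show ?thesis
    by (simp only: sum_Lp_norm_diff_powr[OF cm p I f g] sum_Lp_norm_diff_powr[OF cm p I f h])
qed

lemma relative_center_selection_in_Lp_set:
  assumes cm: "complete_measure M" and Y: "subspace Y" and p: "p > 0" and n: "n \<ge> 1"
    and f: "\<And>i. i \<in> {1..n} \<Longrightarrow> f i \<in> Lp_set M p"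
    and g: "strongly_measurable M g"
    and center: "AE s in M. relative_center Y (\<lambda>i. f i s) n p (g s)"
  shows "g \<in> Lp_set M p"
proof (rule Lp_setI[OF g])
  show "integrable M (\<lambda>s. norm (g s) powr p)"
  proof (rule Bochner_Integration.integrable_bound)
    show "integrable M (\<lambda>s. 2 powr (p + 1) * (\<Sum>i=1..n. norm (f i s) powr p))"
      using Lp_set_integrable_norm_powr[OF cm f] by auto
    show "(\<lambda>s. norm (g s) powr p) \<in> borel_measurable M"
      using strongly_measurable_borel_measurable[OF cm g] by measurable
    show "AE s in M. norm (norm (g s) powr p) \<le> norm (2 powr (p + 1) * (\<Sum>i=1..n. norm (f i s) powr p))"
      using center
      by eventually_elim
        (use relative_center_norm_powr_le[OF Y _ n] p in \<open>auto simp: sum_nonneg\<close>)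
  qed
qed

theorem mainTheorem4:
  fixes M :: "'a measure" and Y :: "'b::banach set" and p :: real and n :: nat
    and f :: "nat \<Rightarrow> 'a \<Rightarrow> 'b" and g :: "'a \<Rightarrow> 'b"
  assumes "prob_space M" and "complete_measure M"
    and "subspace Y" and "closed Y"
    and "1 \<le> p" and "n \<ge> 1"
    and "\<And>i. i \<in> {1..n} \<Longrightarrow> f i \<in> Lp_set M p"
    and "\<And>s. s \<in> space M \<Longrightarrow> g s \<in> Y"
    and "strongly_measurable M g"
    and "AE s in M. relative_center Y (\<lambda>i. f i s) n p (g s)"
  shows "g \<in> Lp_sub M p Y \<and>
    (\<forall>h \<in> Lp_sub M p Y. (\<Sum>i=1..n. Lp_norm M p (\<lambda>s. f i s - g s) powr p)
                          \<le> (\<Sum>i=1..n. Lp_norm M p (\<lambda>s. f i s - h s) powr p))"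
proof -
  have p: "p > 0" using assms(5) by simp
  have g: "g \<in> Lp_set M p"
    using relative_center_selection_in_Lp_set[OF assms(2,3) p assms(6,7,9,10)] .
  have "(\<Sum>i=1..n. Lp_norm M p (\<lambda>s. f i s - g s) powr p)
      \<le> (\<Sum>i=1..n. Lp_norm M p (\<lambda>s. f i s - h s) powr p)" if "h \<in> Lp_sub M p Y" for h
  proof (rule sum_Lp_norm_diff_powr_mono[OF assms(2) p _ assms(7) g])
    show "h \<in> Lp_set M p" using that by (simp add: Lp_sub_def)
    have "AE s in M. h s \<in> Y" using that by (simp add: Lp_sub_def)
    then show "AE s in M. (\<Sum>i=1..n. norm (f i s - g s) powr p) \<le> (\<Sum>i=1..n. norm (f i s - h s) powr p)"
      using assms(10) by eventually_elim (simp add: relative_center_def)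
  qed simp
  then show ?thesis
    using g assms(8) by (simp add: Lp_sub_def)
qed

end
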